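(* Let $m,n\ge 1$ be integers, let $\mathbf{x}=(x_1,\dots,x_n)\in\mathbb{R}^n$ be fixed, and let $W=(w_{ij}), H=(h_{ij})\in\mathbb{R}^{m\times n}$. For $1\le i\le m$ define $\varphi_{\mathbf{x},i}(W)=\max_{1\le j\le n}(w_{ij}+x_j)$, let $J_i=\{j\in\{1,\dots,n\}: \varphi_{\mathbf{x},i}(W)=w_{ij}+x_j\}$, and let $K_i=\{k\in\{1,\dots,n\}: h_{ik}>\max_{j\in J_i}h_{ij}\}$. Define $$\epsilon_i=\min_{k\in K_i}\frac{\varphi_{\mathbf{x},i}(W)-(w_{ik}+x_k)}{h_{ik}-\max_{j\in J_i}h_{ij}},\qquad 1\le i\le m,$$ (with the convention that the minimum over the empty set is $+\infty$) and $\epsilon=\min_{1\le i\le m}\epsilon_i$. Let $\delta_{\mathbf{x}}:\mathbb{R}^{m\times n}\to\mathbb{R}^m$ be $\delta_{\mathbf{x}}(W)=(\varphi_{\mathbf{x},i}(W))_{1\le i\le m}$. Then for every $\eta\in\mathbb{R}^+=[0,\infty)$, $$\eta\in[0,\epsilon]\iff \delta_{\mathbf{x}}(W+\eta H)=\delta_{\mathbf{x}}(W)+\eta\Big(\max_{j\in J_i}h_{ij}\Big)_{1\le i\le m}.$$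
   Context: $\delta_{\mathbf{x}}$ is the dilation layer viewed as a function of its weight matrix $W$ for fixed input $\mathbf{x}$: its $i$-th output is $\max_{1\le k\le n}(x_k+w_{ik})$. When $K_i$ is empty, $\epsilon_i=+\infty$ and $[0,\epsilon]$ is understood as $[0,\infty)$ if $\epsilon=+\infty$. *)

theory Defs
  imports "HOL-Analysis.Analysis" "HOL-Library.Extended_Real"
begin

text \<open>Indices: rows i :: 'm, columns j :: 'n (finite types, so m, n >= 1).
  A matrix W in R^{m x n} is W :: real^'n^'m with entry w_ij = W$i$j.\<close>

definition phi :: "real^'n \<Rightarrow> real^'n^'m \<Rightarrow> 'm \<Rightarrow> real" where
  "phi x W i = Max (range (\<lambda>j. W$i$j + x$j))"

definition Jset :: "real^'n \<Rightarrow> real^'n^'m \<Rightarrow> 'm \<Rightarrow> 'n set" where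
  "Jset x W i = {j. phi x W i = W$i$j + x$j}"

definition hmax :: "real^'n \<Rightarrow> real^'n^'m \<Rightarrow> real^'n^'m \<Rightarrow> 'm \<Rightarrow> real" where
  "hmax x W H i = Max ((\<lambda>j. H$i$j) ` Jset x W i)"

definition Kset :: "real^'n \<Rightarrow> real^'n^'m \<Rightarrow> real^'n^'m \<Rightarrow> 'm \<Rightarrow> 'n set" where
  "Kset x W H i = {k. H$i$k > hmax x W H i}"

definition eps_i :: "real^'n \<Rightarrow> real^'n^'m \<Rightarrow> real^'n^'m \<Rightarrow> 'm \<Rightarrow> ereal" where
  "eps_i x W H i =
     (if Kset x W H i = {} then \<infinity>
      else ereal (Min ((\<lambda>k. (phi x W i - (W$i$k + x$k)) / (H$i$k - hmax x W H i)) ` Kset x W H i)))"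

definition eps :: "real^'n \<Rightarrow> real^'n^'m \<Rightarrow> real^'n^'m \<Rightarrow> ereal" where
  "eps x W H = Min (range (eps_i x W H))"

definition dilation :: "real^'n \<Rightarrow> real^'n^'m \<Rightarrow> real^'m" where
  "dilation x W = (\<chi> i. phi x W i)"

end

theory Submission
  imports Defs
begin

text \<open>Fix a row i and put c = phi x W i + \<eta> * hmax x W H i. Along the direction H the
  row maximum is at least c, attained at an index of J_i on which H is largest, so the
  dilation moves linearly iff w_ik + \<eta> h_ik + x_k \<le> c for every k. For k \<notin> K_i
  this holds for all \<eta> \<ge> 0; for k \<in> K_i it says exactly that \<eta> is at most the k-th
  ratio defining eps_i.\<close>

definition step_ratio :: "real^'n \<Rightarrow> real^'n^'m \<Rightarrow> real^'n^'m \<Rightarrow> 'm \<Rightarrow> 'n \<Rightarrow> real" where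
  "step_ratio x W H i k = (phi x W i - (W$i$k + x$k)) / (H$i$k - hmax x W H i)"

lemma phi_ge: "W$i$j + x$j \<le> phi x W i"
  unfolding phi_def by (rule Max_ge) auto

lemma phi_attained: "\<exists>j. phi x W i = W$i$j + x$j"
proof -
  have "phi x W i \<in> range (\<lambda>j. W$i$j + x$j)"
    unfolding phi_def by (rule Max_in) auto
  then show ?thesis by auto
qed

lemma Jset_nonempty: "Jset x W i \<noteq> {}"
  using phi_attained[of x W i] unfolding Jset_def by auto

lemma hmax_attained: "\<exists>j\<in>Jset x W i. hmax x W H i = H$i$j"
proof -
  have "hmax x W H i \<in> (\<lambda>j. H$i$j) ` Jset x W i"
    unfolding hmax_def by (rule Max_in) (use Jset_nonempty in auto)
  then show ?thesis by auto
qed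

lemma phi_add_smult_eq_iff:
  "phi x (W + \<eta> *\<^sub>R H) i = phi x W i + \<eta> * hmax x W H i \<longleftrightarrow>
   (\<forall>k. W$i$k + \<eta> * H$i$k + x$k \<le> phi x W i + \<eta> * hmax x W H i)"
proof -
  obtain j where "j \<in> Jset x W i" and "hmax x W H i = H$i$j"
    using hmax_attained by blast
  then have "phi x W i + \<eta> * hmax x W H i \<in> range (\<lambda>k. W$i$k + \<eta> * H$i$k + x$k)"
    unfolding Jset_def by (auto intro!: range_eqI[of _ _ j])
  moreover have "phi x (W + \<eta> *\<^sub>R H) i = Max (range (\<lambda>k. W$i$k + \<eta> * H$i$k + x$k))"
    unfolding phi_def by (simp add: algebra_simps)
  ultimately show ?thesis
    by (simp add: Max_eq_iff)
qed

lemma add_smult_entry_le_iff: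
  assumes "\<eta> \<ge> 0"
  shows "W$i$k + \<eta> * H$i$k + x$k \<le> phi x W i + \<eta> * hmax x W H i \<longleftrightarrow>
         (k \<in> Kset x W H i \<longrightarrow> \<eta> \<le> step_ratio x W H i k)"
proof (cases "k \<in> Kset x W H i")
  case True
  then have "H$i$k - hmax x W H i > 0"
    unfolding Kset_def by simp
  then have "\<eta> \<le> step_ratio x W H i k \<longleftrightarrow>
             \<eta> * (H$i$k - hmax x W H i) \<le> phi x W i - (W$i$k + x$k)"
    unfolding step_ratio_def by (simp add: pos_le_divide_eq)
  then show ?thesis
    using True by (simp add: algebra_simps)
next
  case False
  then have "\<eta> * H$i$k \<le> \<eta> * hmax x W H i"
    unfolding Kset_def using assms by (simp add: mult_left_mono)
  then show ?thesis
    using False phi_ge[of W i k x] by simp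
qed

lemma ereal_le_eps_i_iff:
  "ereal \<eta> \<le> eps_i x W H i \<longleftrightarrow> (\<forall>k\<in>Kset x W H i. \<eta> \<le> step_ratio x W H i k)"
  unfolding eps_i_def step_ratio_def[abs_def] by simp

lemma ereal_le_eps_i_iff_phi_add_smult:
  assumes "\<eta> \<ge> 0"
  shows "ereal \<eta> \<le> eps_i x W H i \<longleftrightarrow>
         phi x (W + \<eta> *\<^sub>R H) i = phi x W i + \<eta> * hmax x W H i"
  unfolding ereal_le_eps_i_iff phi_add_smult_eq_iff add_smult_entry_le_iff[OF assms] by blast

theorem proposition1:
  fixes x :: "real^'n" and W H :: "real^'n^'m" and \<eta> :: real
  assumes "\<eta> \<ge> 0"
  shows "ereal \<eta> \<le> eps x W H \<longleftrightarrow>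
         dilation x (W + \<eta> *\<^sub>R H) = dilation x W + \<eta> *\<^sub>R (\<chi> i. hmax x W H i)"
proof -
  have "ereal \<eta> \<le> eps x W H \<longleftrightarrow> (\<forall>i. ereal \<eta> \<le> eps_i x W H i)"
    unfolding eps_def by simp
  also have "\<dots> \<longleftrightarrow> (\<forall>i. phi x (W + \<eta> *\<^sub>R H) i = phi x W i + \<eta> * hmax x W H i)"
    using ereal_le_eps_i_iff_phi_add_smult[OF assms] by blast
  also have "\<dots> \<longleftrightarrow> dilation x (W + \<eta> *\<^sub>R H) = dilation x W + \<eta> *\<^sub>R (\<chi> i. hmax x W H i)"
    unfolding dilation_def by (simp add: vec_eq_iff)
  finally show ?thesis .
qed

end
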